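(* Let $G_1,G_2$ be connected infinite graphs with vertex degrees uniformly bounded, which are quasi-isometric. If $G_2$ is weighted hyperfinite, then so is $G_1$.
   Context: $G_1$ and $G_2$ are quasi-isometric if there is a map $\iota:V(G_1)\to V(G_2)$ and a constant $c>0$ such that $c^{-1}d_{G_1}(x,y)-c\le d_{G_2}(\iota(x),\iota(y))\le c\,d_{G_1}(x,y)+c$ for all $x,y\in V(G_1)$, and every $z\in V(G_2)$ is within $d_{G_2}$-distance $c$ of $\iota(V(G_1))$; here $d_{G_i}$ are the graph (shortest path) metrics. A connected infinite bounded-degree graph $G$ is weighted hyperfinite if for every $\epsilon>0$ there is $K_\epsilon>0$ such that for every finite induced subgraph $L\subseteq G$ and every $w:V(L)\to[0,\infty)$ there is $M\subseteq V(L)$ with $\sum_{x\in M}w(x)\le\epsilon\sum_{x\in V(L)}w(x)$ such that every connected component of $L$ with $M$ deleted has at most $K_\epsilon$ vertices. *)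

theory Defs
  imports Main "HOL-Library.Extended_Real" Complex_Main
begin

definition is_graph :: "'a set \<Rightarrow> ('a \<Rightarrow> 'a \<Rightarrow> bool) \<Rightarrow> bool" where
  "is_graph V E \<longleftrightarrow> (\<forall>x y. E x y \<longrightarrow> x \<in> V \<and> y \<in> V \<and> E y x) \<and> (\<forall>x. \<not> E x x)"

definition walk_in :: "'a set \<Rightarrow> ('a \<Rightarrow> 'a \<Rightarrow> bool) \<Rightarrow> 'a list \<Rightarrow> bool" where
  "walk_in S E xs \<longleftrightarrow> xs \<noteq> [] \<and> set xs \<subseteq> S \<and>
     (\<forall>i. Suc i < length xs \<longrightarrow> E (xs ! i) (xs ! Suc i))"

definition reach_in :: "'a set \<Rightarrow> ('a \<Rightarrow> 'a \<Rightarrow> bool) \<Rightarrow> 'a \<Rightarrow> 'a \<Rightarrow> bool" where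
  "reach_in S E x y \<longleftrightarrow> (\<exists>xs. walk_in S E xs \<and> hd xs = x \<and> last xs = y)"

definition gdist :: "'a set \<Rightarrow> ('a \<Rightarrow> 'a \<Rightarrow> bool) \<Rightarrow> 'a \<Rightarrow> 'a \<Rightarrow> nat" where
  "gdist V E x y = (LEAST n. \<exists>xs. walk_in V E xs \<and> hd xs = x \<and> last xs = y \<and> length xs = Suc n)"

definition connected_graph :: "'a set \<Rightarrow> ('a \<Rightarrow> 'a \<Rightarrow> bool) \<Rightarrow> bool" where
  "connected_graph V E \<longleftrightarrow> (\<forall>x\<in>V. \<forall>y\<in>V. reach_in V E x y)"

definition bounded_degree :: "'a set \<Rightarrow> ('a \<Rightarrow> 'a \<Rightarrow> bool) \<Rightarrow> bool" where
  "bounded_degree V E \<longleftrightarrow> (\<exists>D::nat. \<forall>x\<in>V. finite {y. E x y} \<and> card {y. E x y} \<le> D)"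

definition quasi_isometric ::
  "'a set \<Rightarrow> ('a \<Rightarrow> 'a \<Rightarrow> bool) \<Rightarrow> 'b set \<Rightarrow> ('b \<Rightarrow> 'b \<Rightarrow> bool) \<Rightarrow> bool" where
  "quasi_isometric V1 E1 V2 E2 \<longleftrightarrow>
    (\<exists>(\<iota>::'a \<Rightarrow> 'b) (c::real). c > 0 \<and> \<iota> ` V1 \<subseteq> V2 \<and>
      (\<forall>x\<in>V1. \<forall>y\<in>V1.
         real (gdist V1 E1 x y) / c - c \<le> real (gdist V2 E2 (\<iota> x) (\<iota> y)) \<and>
         real (gdist V2 E2 (\<iota> x) (\<iota> y)) \<le> c * real (gdist V1 E1 x y) + c) \<and>
      (\<forall>z\<in>V2. \<exists>x\<in>V1. real (gdist V2 E2 z (\<iota> x)) \<le> c))"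

text \<open>Weighted hyperfiniteness: finite induced subgraphs are given by finite vertex sets
  L \<subseteq> V; the components of L with M deleted are the reachability classes inside L - M.\<close>
definition weighted_hyperfinite :: "'a set \<Rightarrow> ('a \<Rightarrow> 'a \<Rightarrow> bool) \<Rightarrow> bool" where
  "weighted_hyperfinite V E \<longleftrightarrow>
    (\<forall>\<epsilon>::real. \<epsilon> > 0 \<longrightarrow> (\<exists>K::real. K > 0 \<and>
      (\<forall>L w. finite L \<and> L \<subseteq> V \<and> (\<forall>x\<in>L. w x \<ge> (0::real)) \<longrightarrow>
        (\<exists>M\<subseteq>L. sum w M \<le> \<epsilon> * sum w L \<and>
           (\<forall>x\<in>L - M. real (card {y. reach_in (L - M) E x y}) \<le> K)))))"

end

theory Submission
  imports Defs
begin

(* Let iota : V1 -> V2 be the quasi-isometry.  It is a coarse embedding: adjacent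
   vertices are mapped within distance R, and each fibre of iota has diameter at most r.
   Given a finite L in G1 with weights w, we thicken iota(L) to its R-neighbourhood L'
   and push w forward, w'(z) = sum of w(x) over the x in L with z within R of iota(x).
   Hyperfiniteness of G2 (with epsilon / B2, B2 bounding the size of R-balls) yields a cut
   M' of L'; we cut M = the points of L lying R-close to M'.  Double counting shows
   w(M) <= w'(M') and w'(L') <= B2 * w(L), so M is cheap.  Each edge of L - M maps to a
   geodesic inside L' - M', so iota maps components of L - M into components of L' - M',
   with fibres of size at most B1 (the bound for r-balls in G1); hence the components of
   L - M have at most K' * B1 vertices. *)

section \<open>Walks and reachability\<close>

lemma walk_Cons:
  "walk_in S E (x # xs) \<longleftrightarrow> x \<in> S \<and> (xs = [] \<or> (walk_in S E xs \<and> E x (hd xs)))"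
  by (cases xs) (auto simp: walk_in_def nth_Cons split: nat.splits)

definition edge_in :: "'a set \<Rightarrow> ('a \<Rightarrow> 'a \<Rightarrow> bool) \<Rightarrow> 'a \<Rightarrow> 'a \<Rightarrow> bool" where
  "edge_in S E a b \<longleftrightarrow> E a b \<and> a \<in> S \<and> b \<in> S"

lemma walk_in_rtranclp: "walk_in S E xs \<Longrightarrow> (edge_in S E)\<^sup>*\<^sup>* (hd xs) (last xs)"
proof (induction xs)
  case Nil
  then show ?case by (simp add: walk_in_def)
next
  case (Cons x xs)
  show ?case
  proof (cases "xs = []")
    case False
    with Cons.prems have xs: "walk_in S E xs" "E x (hd xs)" "x \<in> S"
      by (simp_all add: walk_Cons)
    with False have "hd xs \<in> S" by (auto simp: walk_in_def)
    with xs Cons.IH False show ?thesis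
      by (auto intro: converse_rtranclp_into_rtranclp simp: edge_in_def)
  qed simp
qed

lemma rtranclp_reach_in: "(edge_in S E)\<^sup>*\<^sup>* x y \<Longrightarrow> x \<in> S \<Longrightarrow> reach_in S E x y"
proof (induction rule: converse_rtranclp_induct)
  case base
  then show ?case unfolding reach_in_def by (intro exI[of _ "[y]"]) (simp add: walk_in_def)
next
  case (step a b)
  then obtain ys where ys: "walk_in S E ys" "hd ys = b" "last ys = y"
    unfolding reach_in_def edge_in_def by auto
  with step.hyps(1) have "walk_in S E (a # ys)"
    by (auto simp: walk_Cons edge_in_def)
  with ys show ?case unfolding reach_in_def
    by (intro exI[of _ "a # ys"]) (auto simp: walk_in_def)
qed

lemma reach_in_iff: "reach_in S E x y \<longleftrightarrow> x \<in> S \<and> (edge_in S E)\<^sup>*\<^sup>* x y"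
proof
  assume "reach_in S E x y"
  then obtain xs where xs: "walk_in S E xs" "hd xs = x" "last xs = y"
    unfolding reach_in_def by blast
  then have "x \<in> S" by (auto simp: walk_in_def)
  with xs show "x \<in> S \<and> (edge_in S E)\<^sup>*\<^sup>* x y" using walk_in_rtranclp by blast
qed (auto intro: rtranclp_reach_in)

lemma reach_in_subset: "{y. reach_in S E x y} \<subseteq> S"
  unfolding reach_in_def walk_in_def using last_in_set by blast

lemma reach_in_map:
  assumes edges: "\<And>a b. edge_in S E a b \<Longrightarrow> (edge_in S' E')\<^sup>*\<^sup>* (f a) (f b)"
    and "f x \<in> S'" and "reach_in S E x y"
  shows "reach_in S' E' (f x) (f y)"
proof -
  have "(edge_in S E)\<^sup>*\<^sup>* x y" using assms(3) by (simp add: reach_in_iff)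
  then have "(edge_in S' E')\<^sup>*\<^sup>* (f x) (f y)"
    by induction (auto intro: rtranclp_trans edges)
  with assms(2) show ?thesis by (simp add: reach_in_iff)
qed

section \<open>Distances and geodesics\<close>

lemma gdist_le:
  "walk_in V E xs \<Longrightarrow> hd xs = x \<Longrightarrow> last xs = y \<Longrightarrow> length xs = Suc n \<Longrightarrow> gdist V E x y \<le> n"
  unfolding gdist_def by (rule Least_le) blast

lemma geodesic_exists:
  assumes "connected_graph V E" "x \<in> V" "y \<in> V"
  obtains xs where "walk_in V E xs" "hd xs = x" "last xs = y" "length xs = Suc (gdist V E x y)"
proof -
  obtain xs where xs: "walk_in V E xs" "hd xs = x" "last xs = y"
    using assms unfolding connected_graph_def reach_in_def by blast
  then have "length xs = Suc (length xs - 1)" by (simp add: walk_in_def)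
  with xs have "\<exists>n xs. walk_in V E xs \<and> hd xs = x \<and> last xs = y \<and> length xs = Suc n"
    by blast
  then have "\<exists>xs. walk_in V E xs \<and> hd xs = x \<and> last xs = y \<and> length xs = Suc (gdist V E x y)"
    unfolding gdist_def by (rule LeastI_ex)
  with that show ?thesis by blast
qed

lemma gdist_self: "x \<in> V \<Longrightarrow> gdist V E x x = 0"
  using gdist_le[of V E "[x]" x x 0] by (simp add: walk_in_def)

lemma gdist_edge: "E a b \<Longrightarrow> a \<in> V \<Longrightarrow> b \<in> V \<Longrightarrow> gdist V E a b \<le> 1"
  by (rule gdist_le[of V E "[a,b]"]) (auto simp: walk_in_def less_Suc_eq)

lemma gdist_walk_prefix:
  assumes "walk_in V E xs" "i < length xs"
  shows "gdist V E (hd xs) (xs ! i) \<le> i"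
proof (rule gdist_le)
  show "walk_in V E (take (Suc i) xs)"
    using assms set_take_subset[of "Suc i" xs] unfolding walk_in_def by auto
  show "last (take (Suc i) xs) = xs ! i"
    using assms(2) by (simp add: take_Suc_conv_app_nth)
qed (use assms(2) in auto)

lemma geodesic_within_distance:
  assumes "connected_graph V E" "a \<in> V" "b \<in> V"
  obtains xs where "walk_in V E xs" "hd xs = a" "last xs = b"
    "\<forall>v\<in>set xs. v \<in> V \<and> gdist V E a v \<le> gdist V E a b"
proof -
  obtain xs where xs: "walk_in V E xs" "hd xs = a" "last xs = b"
    "length xs = Suc (gdist V E a b)"
    using geodesic_exists[OF assms] .
  have "v \<in> V \<and> gdist V E a v \<le> gdist V E a b" if "v \<in> set xs" for v
  proof -
    obtain i where i: "i < length xs" "v = xs ! i" using \<open>v \<in> set xs\<close> by (auto simp: in_set_conv_nth)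
    with gdist_walk_prefix[OF xs(1) i(1)] xs(2,4) show ?thesis
      using xs(1) by (auto simp: walk_in_def)
  qed
  with xs show ?thesis using that by blast
qed

section \<open>Balls in graphs of bounded degree\<close>

definition gball :: "'a set \<Rightarrow> ('a \<Rightarrow> 'a \<Rightarrow> bool) \<Rightarrow> 'a \<Rightarrow> nat \<Rightarrow> 'a set" where
  "gball V E a r = {z \<in> V. gdist V E a z \<le> r}"

text \<open>The vertices reachable from a in at most n steps, defined by iterating
  the neighbourhood operation; this is what makes their number easy to bound.\<close>
fun nbhd :: "('a \<Rightarrow> 'a \<Rightarrow> bool) \<Rightarrow> 'a \<Rightarrow> nat \<Rightarrow> 'a set" where
  "nbhd E a 0 = {a}"
| "nbhd E a (Suc n) = nbhd E a n \<union> (\<Union>y\<in>nbhd E a n. {z. E y z})"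

lemma nbhd_mono: "m \<le> n \<Longrightarrow> nbhd E a m \<subseteq> nbhd E a n"
  by (induction n) (auto simp: le_Suc_eq)

lemma nbhd_step: "E x y \<Longrightarrow> nbhd E y n \<subseteq> nbhd E x (Suc n)"
  by (induction n) auto

lemma nbhd_card:
  assumes g: "is_graph V E" and a: "a \<in> V"
    and D: "\<forall>x\<in>V. finite {y. E x y} \<and> card {y. E x y} \<le> D"
  shows "nbhd E a n \<subseteq> V \<and> finite (nbhd E a n) \<and> card (nbhd E a n) \<le> (D + 1) ^ n"
proof (induction n)
  case 0
  then show ?case using a by simp
next
  case (Suc n)
  let ?A = "nbhd E a n" and ?N = "\<Union>y\<in>nbhd E a n. {z. E y z}"
  have "?N \<subseteq> V" using g Suc unfolding is_graph_def by blast
  moreover have "finite ?N" using Suc D by blast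
  moreover have "card ?N \<le> card ?A * D"
  proof -
    have "card ?N \<le> (\<Sum>y\<in>?A. card {z. E y z})" using Suc by (intro card_UN_le) simp
    also have "\<dots> \<le> (\<Sum>y\<in>?A. D)" using Suc D by (intro sum_mono) auto
    finally show ?thesis by simp
  qed
  moreover have "card (?A \<union> ?N) \<le> card ?A + card ?N" by (rule card_Un_le)
  moreover have "card ?A * (D + 1) \<le> (D + 1) ^ n * (D + 1)"
    using Suc by (intro mult_right_mono) auto
  ultimately show ?case using Suc by (simp add: mult.commute)
qed

lemma walk_in_nbhd: "walk_in S E xs \<Longrightarrow> length xs = Suc k \<Longrightarrow> last xs \<in> nbhd E (hd xs) k"
proof (induction xs arbitrary: k)
  case (Cons x xs)
  show ?case
  proof (cases xs)
    case (Cons y ys)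
    with Cons.prems obtain k' where "k = Suc k'" "length xs = Suc k'"
      "walk_in S E xs" "E x (hd xs)" by (auto simp: walk_Cons)
    with Cons.IH nbhd_step[of E x "hd xs" k'] Cons show ?thesis by auto
  qed (use Cons in simp)
qed simp

lemma gball_subset_nbhd:
  assumes "connected_graph V E" "a \<in> V"
  shows "gball V E a r \<subseteq> nbhd E a r"
proof
  fix z assume z: "z \<in> gball V E a r"
  obtain xs where xs: "walk_in V E xs" "hd xs = a" "last xs = z" "length xs = Suc (gdist V E a z)"
    using geodesic_exists[OF assms] z by (auto simp: gball_def)
  with walk_in_nbhd[OF xs(1,4)] z nbhd_mono[of "gdist V E a z" r E a] show "z \<in> nbhd E a r"
    by (auto simp: gball_def)
qed

lemma ball_size_bound:
  assumes "is_graph V E" "connected_graph V E" "bounded_degree V E"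
  obtains B :: nat where "B > 0" "\<And>a. a \<in> V \<Longrightarrow> finite (gball V E a r) \<and> card (gball V E a r) \<le> B"
proof -
  obtain D where D: "\<forall>x\<in>V. finite {y. E x y} \<and> card {y. E x y} \<le> D"
    using assms(3) unfolding bounded_degree_def by blast
  have "finite (gball V E a r) \<and> card (gball V E a r) \<le> (D + 1) ^ r" if "a \<in> V" for a
    using nbhd_card[OF assms(1) that D, of r] gball_subset_nbhd[OF assms(2) that, of r]
    by (meson card_mono finite_subset order_trans)
  then show ?thesis using that[of "(D + 1) ^ r"] by simp
qed

section \<open>Double counting\<close>

lemma card_le_image_fibres:
  assumes "finite A" "\<And>z. z \<in> f ` A \<Longrightarrow> card {x\<in>A. f x = z} \<le> b"
  shows "card A \<le> card (f ` A) * b"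
proof -
  have "card A = card (\<Union>z\<in>f ` A. {x\<in>A. f x = z})" by (rule arg_cong[of _ _ card]) auto
  also have "\<dots> \<le> (\<Sum>z\<in>f ` A. card {x\<in>A. f x = z})" using assms(1) by (intro card_UN_le) simp
  also have "\<dots> \<le> (\<Sum>z\<in>f ` A. b)" using assms by (intro sum_mono) auto
  finally show ?thesis by simp
qed

lemma sum_swap_count:
  fixes w :: "'a \<Rightarrow> real"
  assumes "finite L" "finite S"
  shows "(\<Sum>z\<in>S. sum w {x\<in>L. P x z}) = (\<Sum>x\<in>L. w x * real (card {z\<in>S. P x z}))"
proof -
  have "(\<Sum>z\<in>S. sum w {x\<in>L. P x z}) = (\<Sum>z\<in>S. \<Sum>x\<in>L. if P x z then w x else 0)"
    by (simp add: sum.inter_filter assms(1))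
  also have "\<dots> = (\<Sum>x\<in>L. \<Sum>z\<in>S. if P x z then w x else 0)" by (rule sum.swap)
  also have "\<dots> = (\<Sum>x\<in>L. w x * real (card {z\<in>S. P x z}))"
  proof (rule sum.cong[OF refl])
    fix x
    show "(\<Sum>z\<in>S. if P x z then w x else 0) = w x * real (card {z\<in>S. P x z})"
      using sum.inter_filter[OF assms(2), of "\<lambda>_. w x" "P x"] by (simp add: mult.commute)
  qed
  finally show ?thesis .
qed

lemma pushforward_covers:
  fixes w :: "'a \<Rightarrow> real"
  assumes "finite L" "finite M'" "\<And>x. x \<in> L \<Longrightarrow> 0 \<le> w x"
  shows "sum w {x\<in>L. \<exists>z\<in>M'. P x z} \<le> (\<Sum>z\<in>M'. sum w {x\<in>L. P x z})"
proof -
  let ?M = "{x\<in>L. \<exists>z\<in>M'. P x z}"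
  have "sum w ?M \<le> (\<Sum>x\<in>?M. w x * real (card {z\<in>M'. P x z}))"
  proof (rule sum_mono)
    fix x assume x: "x \<in> ?M"
    then have "1 \<le> card {z\<in>M'. P x z}" using assms(2) by (auto simp: Suc_le_eq card_gt_0_iff)
    with x assms(3) show "w x \<le> w x * real (card {z\<in>M'. P x z})"
      using mult_left_mono[of 1 "real (card {z\<in>M'. P x z})" "w x"] by auto
  qed
  also have "\<dots> \<le> (\<Sum>x\<in>L. w x * real (card {z\<in>M'. P x z}))"
    using assms by (intro sum_mono2) auto
  finally show ?thesis using sum_swap_count[OF assms(1,2)] by simp
qed

lemma pushforward_total:
  fixes w :: "'a \<Rightarrow> real"
  assumes "finite L" "finite L'" "\<And>x. x \<in> L \<Longrightarrow> 0 \<le> w x"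
    and "\<And>x. x \<in> L \<Longrightarrow> card {z\<in>L'. P x z} \<le> B"
  shows "(\<Sum>z\<in>L'. sum w {x\<in>L. P x z}) \<le> real B * sum w L"
proof -
  have "(\<Sum>x\<in>L. w x * real (card {z\<in>L'. P x z})) \<le> (\<Sum>x\<in>L. w x * real B)"
    using assms(3,4) by (intro sum_mono mult_left_mono) auto
  then show ?thesis using sum_swap_count[OF assms(1,2)] by (simp add: sum_distrib_left mult.commute)
qed

lemma component_card_pullback:
  assumes "finite S'" "f x \<in> S'"
    and edges: "\<And>a b. edge_in S E a b \<Longrightarrow> (edge_in S' E')\<^sup>*\<^sup>* (f a) (f b)"
    and fibres: "\<And>y. y \<in> S \<Longrightarrow> finite {u\<in>S. f u = f y} \<and> card {u\<in>S. f u = f y} \<le> B"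
  shows "card {y. reach_in S E x y} \<le> card {z. reach_in S' E' (f x) z} * B"
proof -
  let ?C = "{y. reach_in S E x y}" and ?C' = "{z. reach_in S' E' (f x) z}"
  have CS: "?C \<subseteq> S" by (rule reach_in_subset)
  have image: "f ` ?C \<subseteq> ?C'" using reach_in_map[of S E S' E' f, OF edges assms(2)] by blast
  have fibre: "finite {y\<in>?C. f y = z} \<and> card {y\<in>?C. f y = z} \<le> B" if z: "z \<in> f ` ?C" for z
  proof -
    obtain y where y: "y \<in> S" "z = f y" using z CS by blast
    then have sub: "{y'\<in>?C. f y' = z} \<subseteq> {u\<in>S. f u = f y}" using CS by blast
    with fibres[OF y(1)] show ?thesis using card_mono[OF _ sub] finite_subset[OF sub] by simp
  qed
  have "finite ?C'" using reach_in_subset assms(1) by (rule finite_subset)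
  then have "finite (f ` ?C)" using image finite_subset by blast
  then have "finite (\<Union>z\<in>f ` ?C. {y\<in>?C. f y = z})" using fibre by (intro finite_UN_I) auto
  moreover have "?C \<subseteq> (\<Union>z\<in>f ` ?C. {y\<in>?C. f y = z})" by blast
  ultimately have "finite ?C" by (rule finite_subset[rotated])
  then have "card ?C \<le> card (f ` ?C) * B" using fibre by (simp add: card_le_image_fibres)
  also have "\<dots> \<le> card ?C' * B" using card_mono[OF \<open>finite ?C'\<close> image] by simp
  finally show ?thesis .
qed

section \<open>Transfer of weighted hyperfiniteness along coarse embeddings\<close>

lemma path_inside_ball:
  assumes "connected_graph V E" "a \<in> V" "b \<in> V" "gdist V E a b \<le> R"
    and "gball V E a R \<subseteq> T"
  shows "(edge_in T E)\<^sup>*\<^sup>* a b"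
proof -
  obtain xs where xs: "walk_in V E xs" "hd xs = a" "last xs = b"
    and close: "\<forall>v\<in>set xs. v \<in> V \<and> gdist V E a v \<le> gdist V E a b"
    using geodesic_within_distance[OF assms(1-3)] .
  have "set xs \<subseteq> T"
  proof
    fix v assume "v \<in> set xs"
    with close assms(4) have "v \<in> gball V E a R" unfolding gball_def by fastforce
    with assms(5) show "v \<in> T" by blast
  qed
  then have "walk_in T E xs" using xs(1) by (auto simp: walk_in_def)
  then show ?thesis using walk_in_rtranclp xs(2,3) by fastforce
qed

lemma pullback_cut:
  fixes w :: "'a \<Rightarrow> real" and \<iota> :: "'a \<Rightarrow> 'b"
  assumes conn2: "connected_graph V2 E2" and into: "\<iota> ` V1 \<subseteq> V2"
    and coarse: "\<And>a b. a \<in> V1 \<Longrightarrow> b \<in> V1 \<Longrightarrow> E1 a b \<Longrightarrow> gdist V2 E2 (\<iota> a) (\<iota> b) \<le> R"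
    and balls: "\<And>z. z \<in> V2 \<Longrightarrow> finite (gball V2 E2 z R) \<and> card (gball V2 E2 z R) \<le> B2"
    and fibres: "\<And>y. y \<in> V1 \<Longrightarrow> finite {u\<in>V1. \<iota> u = \<iota> y} \<and> card {u\<in>V1. \<iota> u = \<iota> y} \<le> B1"
    and "B2 > 0" "\<epsilon> \<ge> 0"
    and L: "finite L" "L \<subseteq> V1" "\<forall>x\<in>L. 0 \<le> w x"
    and cut2: "\<And>L' w'. finite L' \<and> L' \<subseteq> V2 \<and> (\<forall>z\<in>L'. 0 \<le> w' z) \<Longrightarrow>
      \<exists>M'\<subseteq>L'. sum w' M' \<le> \<epsilon> / real B2 * sum w' L' \<and>
        (\<forall>z\<in>L' - M'. real (card {y. reach_in (L' - M') E2 z y}) \<le> K')"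
  shows "\<exists>M\<subseteq>L. sum w M \<le> \<epsilon> * sum w L \<and>
    (\<forall>x\<in>L - M. real (card {y. reach_in (L - M) E1 x y}) \<le> K' * real B1)"
proof -
  define near where "near x z \<longleftrightarrow> z \<in> gball V2 E2 (\<iota> x) R" for x z
  define L' where "L' = {z. \<exists>x\<in>L. near x z}"
  define w' where "w' z = sum w {x\<in>L. near x z}" for z
  have "L' = (\<Union>x\<in>L. gball V2 E2 (\<iota> x) R)" by (auto simp: L'_def near_def)
  then have "finite L'" using L(1,2) into balls by auto
  moreover have "L' \<subseteq> V2" by (auto simp: L'_def near_def gball_def)
  moreover have "\<forall>z\<in>L'. 0 \<le> w' z" using L(3) by (auto simp: w'_def intro: sum_nonneg)
  ultimately obtain M' where "M' \<subseteq> L'" and cheap': "sum w' M' \<le> \<epsilon> / real B2 * sum w' L'"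
    and small': "\<forall>z\<in>L' - M'. real (card {y. reach_in (L' - M') E2 z y}) \<le> K'"
    using cut2[of L' w'] by auto
  have "finite M'" using \<open>M' \<subseteq> L'\<close> \<open>finite L'\<close> by (rule finite_subset)
  define M where "M = {x\<in>L. \<exists>z\<in>M'. near x z}"
  have "sum w M \<le> sum w' M'"
    unfolding M_def w'_def using pushforward_covers[OF L(1) \<open>finite M'\<close>] L(3) by blast
  also have "\<dots> \<le> \<epsilon> / real B2 * (real B2 * sum w L)"
  proof -
    have "card {z\<in>L'. near x z} \<le> B2" if "x \<in> L" for x
    proof -
      have "\<iota> x \<in> V2" using that L(2) into by blast
      moreover have "{z\<in>L'. near x z} \<subseteq> gball V2 E2 (\<iota> x) R" by (auto simp: near_def)
      ultimately show ?thesis using balls card_mono le_trans by metis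
    qed
    then have "sum w' L' \<le> real B2 * sum w L"
      unfolding w'_def using L \<open>finite L'\<close> by (intro pushforward_total) auto
    then have "\<epsilon> / real B2 * sum w' L' \<le> \<epsilon> / real B2 * (real B2 * sum w L)"
      using \<open>\<epsilon> \<ge> 0\<close> by (intro mult_left_mono) auto
    with cheap' show ?thesis by linarith
  qed
  also have "\<dots> = \<epsilon> * sum w L" using \<open>B2 > 0\<close> by simp
  finally have cheap: "sum w M \<le> \<epsilon> * sum w L" .
  have small: "real (card {y. reach_in (L - M) E1 x y}) \<le> K' * real B1" if x: "x \<in> L - M" for x
  proof -
    have "\<iota> x \<in> V2" using x into L(2) by blast
    then have "near x (\<iota> x)" using gdist_self[of "\<iota> x" V2 E2] by (simp add: near_def gball_def)
    with x have ix: "\<iota> x \<in> L' - M'" by (auto simp: L'_def M_def)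
    have edges: "(edge_in (L' - M') E2)\<^sup>*\<^sup>* (\<iota> a) (\<iota> b)" if "edge_in (L - M) E1 a b" for a b
    proof -
      have a: "E1 a b" "a \<in> L - M" "b \<in> L - M" using that by (auto simp: edge_in_def)
      with L(2) have "a \<in> V1" "b \<in> V1" by auto
      moreover have "gball V2 E2 (\<iota> a) R \<subseteq> L' - M'"
        using a(2) by (auto simp: L'_def M_def near_def)
      ultimately show ?thesis
        using path_inside_ball[OF conn2 _ _ coarse[OF _ _ a(1)]] into by (simp add: image_subset_iff)
    qed
    have fibres': "finite {u\<in>L - M. \<iota> u = \<iota> y} \<and> card {u\<in>L - M. \<iota> u = \<iota> y} \<le> B1"
      if "y \<in> L - M" for y
    proof -
      have sub: "{u\<in>L - M. \<iota> u = \<iota> y} \<subseteq> {u\<in>V1. \<iota> u = \<iota> y}" using L(2) by blast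
      have "y \<in> V1" using that L(2) by blast
      with fibres show ?thesis using card_mono[OF _ sub] finite_subset[OF sub] by fastforce
    qed
    have "card {y. reach_in (L - M) E1 x y} \<le> card {z. reach_in (L' - M') E2 (\<iota> x) z} * B1"
      using \<open>finite L'\<close> by (intro component_card_pullback[OF _ ix edges fibres']) auto
    then have "real (card {y. reach_in (L - M) E1 x y})
        \<le> real (card {z. reach_in (L' - M') E2 (\<iota> x) z}) * real B1"
      by (metis of_nat_le_iff of_nat_mult)
    also have "\<dots> \<le> K' * real B1" using small' ix by (intro mult_right_mono) auto
    finally show ?thesis .
  qed
  have "M \<subseteq> L" by (auto simp: M_def)
  with cheap small show ?thesis by blast
qed

lemma weighted_hyperfinite_pullback:
  fixes \<iota> :: "'a \<Rightarrow> 'b"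
  assumes conn2: "connected_graph V2 E2" and hf: "weighted_hyperfinite V2 E2"
    and into: "\<iota> ` V1 \<subseteq> V2"
    and coarse: "\<And>a b. a \<in> V1 \<Longrightarrow> b \<in> V1 \<Longrightarrow> E1 a b \<Longrightarrow> gdist V2 E2 (\<iota> a) (\<iota> b) \<le> R"
    and balls: "\<And>z. z \<in> V2 \<Longrightarrow> finite (gball V2 E2 z R) \<and> card (gball V2 E2 z R) \<le> B2"
    and fibres: "\<And>y. y \<in> V1 \<Longrightarrow> finite {u\<in>V1. \<iota> u = \<iota> y} \<and> card {u\<in>V1. \<iota> u = \<iota> y} \<le> B1"
    and "B1 > 0" "B2 > 0"
  shows "weighted_hyperfinite V1 E1"
  unfolding weighted_hyperfinite_def
proof (intro allI impI)
  fix \<epsilon> :: real assume "\<epsilon> > 0"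
  then have "\<epsilon> / real B2 > 0" using \<open>B2 > 0\<close> by simp
  then obtain K' where "K' > 0" and cut2: "\<forall>L' w'. finite L' \<and> L' \<subseteq> V2 \<and> (\<forall>z\<in>L'. 0 \<le> w' z) \<longrightarrow>
      (\<exists>M'\<subseteq>L'. sum w' M' \<le> \<epsilon> / real B2 * sum w' L' \<and>
        (\<forall>z\<in>L' - M'. real (card {y. reach_in (L' - M') E2 z y}) \<le> K'))"
    using hf[unfolded weighted_hyperfinite_def, rule_format, OF \<open>\<epsilon> / real B2 > 0\<close>] by blast
  show "\<exists>K>0. \<forall>L w. finite L \<and> L \<subseteq> V1 \<and> (\<forall>x\<in>L. 0 \<le> w x) \<longrightarrow>
      (\<exists>M\<subseteq>L. sum w M \<le> \<epsilon> * sum w L \<and>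
        (\<forall>x\<in>L - M. real (card {y. reach_in (L - M) E1 x y}) \<le> K))"
  proof (intro exI[of _ "K' * real B1"] conjI allI impI)
    show "K' * real B1 > 0" using \<open>K' > 0\<close> \<open>B1 > 0\<close> by simp
    fix L and w :: "'a \<Rightarrow> real" assume "finite L \<and> L \<subseteq> V1 \<and> (\<forall>x\<in>L. 0 \<le> w x)"
    then have L: "finite L" "L \<subseteq> V1" "\<forall>x\<in>L. 0 \<le> w x" by auto
    from \<open>\<epsilon> > 0\<close> have "\<epsilon> \<ge> 0" by simp
    from pullback_cut[OF conn2 into coarse balls fibres \<open>B2 > 0\<close> this L cut2[rule_format]]
    show "\<exists>M\<subseteq>L. sum w M \<le> \<epsilon> * sum w L \<and>
        (\<forall>x\<in>L - M. real (card {y. reach_in (L - M) E1 x y}) \<le> K' * real B1)" .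
  qed
qed

section \<open>Quasi-isometries are coarse embeddings\<close>

text \<open>A quasi-isometry with constant c moves adjacent vertices at most R = \<lceil>2c\<rceil> apart,
  and identifies only vertices at distance at most r = \<lfloor>c * c\<rfloor>.\<close>
lemma quasi_isometry_coarse_embedding:
  assumes "quasi_isometric V1 E1 V2 E2"
  obtains \<iota> :: "'a \<Rightarrow> 'b" and R r :: nat where "\<iota> ` V1 \<subseteq> V2"
    "\<And>a b. a \<in> V1 \<Longrightarrow> b \<in> V1 \<Longrightarrow> E1 a b \<Longrightarrow> gdist V2 E2 (\<iota> a) (\<iota> b) \<le> R"
    "\<And>x y. x \<in> V1 \<Longrightarrow> y \<in> V1 \<Longrightarrow> \<iota> x = \<iota> y \<Longrightarrow> gdist V1 E1 x y \<le> r"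
proof -
  obtain \<iota> :: "'a \<Rightarrow> 'b" and c :: real where c: "c > 0" and into: "\<iota> ` V1 \<subseteq> V2"
    and qi: "\<forall>x\<in>V1. \<forall>y\<in>V1. real (gdist V1 E1 x y) / c - c \<le> real (gdist V2 E2 (\<iota> x) (\<iota> y)) \<and>
         real (gdist V2 E2 (\<iota> x) (\<iota> y)) \<le> c * real (gdist V1 E1 x y) + c"
    using assms unfolding quasi_isometric_def by blast
  have R_bound: "gdist V2 E2 (\<iota> a) (\<iota> b) \<le> nat \<lceil>2 * c\<rceil>"
    if "a \<in> V1" "b \<in> V1" "E1 a b" for a b
  proof -
    have "real (gdist V1 E1 a b) \<le> 1" using gdist_edge[of E1 a b V1] that by simp
    then have "c * real (gdist V1 E1 a b) \<le> c" using c by (simp add: mult_left_le)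
    moreover have "real (gdist V2 E2 (\<iota> a) (\<iota> b)) \<le> c * real (gdist V1 E1 a b) + c"
      using qi that(1,2) by blast
    ultimately show ?thesis by linarith
  qed
  have r_bound: "gdist V1 E1 x y \<le> nat \<lfloor>c * c\<rfloor>"
    if "x \<in> V1" "y \<in> V1" "\<iota> x = \<iota> y" for x y
  proof -
    have "gdist V2 E2 (\<iota> x) (\<iota> y) = 0" using gdist_self into that by (metis image_subset_iff)
    moreover have "real (gdist V1 E1 x y) / c - c \<le> real (gdist V2 E2 (\<iota> x) (\<iota> y))"
      using qi that(1,2) by blast
    ultimately have "real (gdist V1 E1 x y) / c \<le> c" by simp
    then have "real (gdist V1 E1 x y) \<le> c * c" using c by (simp add: divide_le_eq)
    then show ?thesis by linarith
  qed
  from that[OF into R_bound r_bound] show ?thesis .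
qed

theorem proposition3p1:
  fixes V1 :: "'a set" and E1 :: "'a \<Rightarrow> 'a \<Rightarrow> bool"
    and V2 :: "'b set" and E2 :: "'b \<Rightarrow> 'b \<Rightarrow> bool"
  assumes "is_graph V1 E1" "connected_graph V1 E1" "infinite V1" "bounded_degree V1 E1"
    and "is_graph V2 E2" "connected_graph V2 E2" "infinite V2" "bounded_degree V2 E2"
    and "quasi_isometric V1 E1 V2 E2"
    and "weighted_hyperfinite V2 E2"
  shows "weighted_hyperfinite V1 E1"
proof -
  obtain \<iota> :: "'a \<Rightarrow> 'b" and R r where into: "\<iota> ` V1 \<subseteq> V2"
    and coarse: "\<And>a b. a \<in> V1 \<Longrightarrow> b \<in> V1 \<Longrightarrow> E1 a b \<Longrightarrow> gdist V2 E2 (\<iota> a) (\<iota> b) \<le> R"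
    and fibre_radius: "\<And>x y. x \<in> V1 \<Longrightarrow> y \<in> V1 \<Longrightarrow> \<iota> x = \<iota> y \<Longrightarrow> gdist V1 E1 x y \<le> r"
    using quasi_isometry_coarse_embedding[OF assms(9)] by blast
  obtain B2 where "B2 > 0" and balls2: "\<And>z. z \<in> V2 \<Longrightarrow> finite (gball V2 E2 z R) \<and> card (gball V2 E2 z R) \<le> B2"
    using ball_size_bound[OF assms(5,6,8)] by blast
  obtain B1 where "B1 > 0" and balls1: "\<And>y. y \<in> V1 \<Longrightarrow> finite (gball V1 E1 y r) \<and> card (gball V1 E1 y r) \<le> B1"
    using ball_size_bound[OF assms(1,2,4)] by blast
  have fibres: "finite {u\<in>V1. \<iota> u = \<iota> y} \<and> card {u\<in>V1. \<iota> u = \<iota> y} \<le> B1" if "y \<in> V1" for y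
  proof -
    have sub: "{u\<in>V1. \<iota> u = \<iota> y} \<subseteq> gball V1 E1 y r"
      using fibre_radius[OF that] by (auto simp: gball_def)
    with balls1[OF that] show ?thesis using card_mono[OF _ sub] finite_subset[OF sub] by fastforce
  qed
  show ?thesis
    by (rule weighted_hyperfinite_pullback[OF assms(6,10) into coarse balls2 fibres \<open>B1 > 0\<close> \<open>B2 > 0\<close>])
qed

end
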